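(* If $s>0$ is a knot of $p_0$, then with probability one there exists $n_0$ such that for all $n\ge n_0$, $s$ is a knot of $\hat p_n$.
   Context: For a real sequence $p=(p(k))_{k\in\mathbb N}$ (with $\mathbb N=\{0,1,2,\dots\}$) and $k\ge1$ let $\Delta p(k)=p(k+1)-2p(k)+p(k-1)$. A sequence $p$ is convex if $\Delta p(k)\ge0$ for all integers $k\ge1$; let $\mathcal C$ be the set of convex sequences with $\sum_k p(k)^2<\infty$. A knot of a sequence $p$ is an integer $k\ge1$ with $\Delta p(k)>0$. Let $p_0$ be a convex probability mass function (pmf) on $\mathbb N$ whose support is either $\mathbb N$ or $\{0,1,\dots,S\}$ for some integer $S\ge1$. Let $X_1,X_2,\dots$ be i.i.d. with pmf $p_0$, let $p_n(j)=\frac1n\sum_{i=1}^n\mathbb 1\{X_i=j\}$, and let the least squares estimator $\hat p_n$ be the unique minimizer over $\mathcal C$ of $\Phi_n(p)=\frac12\sum_{j\in\mathbb N}(p_n(j)-p(j))^2$. *)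

theory Defs
  imports "HOL-Probability.Probability"
begin

text \<open>Second difference of a real sequence at k (meaningful for k \<ge> 1).\<close>
definition sdiff :: "(nat \<Rightarrow> real) \<Rightarrow> nat \<Rightarrow> real" where
  "sdiff p k = p (k + 1) - 2 * p k + p (k - 1)"

definition convex_seq :: "(nat \<Rightarrow> real) \<Rightarrow> bool" where
  "convex_seq p \<longleftrightarrow> (\<forall>k\<ge>1. sdiff p k \<ge> 0)"

definition convexL2 :: "(nat \<Rightarrow> real) set" where
  "convexL2 = {p. convex_seq p \<and> summable (\<lambda>k. (p k)\<^sup>2)}"

definition is_knot :: "(nat \<Rightarrow> real) \<Rightarrow> nat \<Rightarrow> bool" where
  "is_knot p k \<longleftrightarrow> k \<ge> 1 \<and> sdiff p k > 0"

definition emp_pmf :: "(nat \<Rightarrow> 'a \<Rightarrow> nat) \<Rightarrow> nat \<Rightarrow> 'a \<Rightarrow> nat \<Rightarrow> real" where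
  "emp_pmf X n \<omega> j = real (card {i \<in> {1..n}. X i \<omega> = j}) / real n"

definition Phi :: "(nat \<Rightarrow> real) \<Rightarrow> (nat \<Rightarrow> real) \<Rightarrow> real" where
  "Phi pn p = (1/2) * (\<Sum>j. (pn j - p j)\<^sup>2)"

definition lse :: "(nat \<Rightarrow> real) \<Rightarrow> (nat \<Rightarrow> real)" where
  "lse pn = (THE p. p \<in> convexL2 \<and> (\<forall>q\<in>convexL2. Phi pn p \<le> Phi pn q))"

end

theory Submission
  imports Defs
begin

(* The estimator lse r is the metric projection, in the Hilbert space l2, of r onto the
   closed convex cone C = convexL2.  The proof has three independent parts:
   (1) Projection theory on C: a minimiser of p \<mapsto> \<Sum>j (r j - p j)^2 over C exists
       (a minimising sequence is pointwise Cauchy by the parallelogram identity, and C as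
       well as the lower bound survive the pointwise limit) and is unique; hence lse r is it.
   (2) Stability: if r_n \<rightarrow> p in l2 with p \<in> C, then |lse r_n j - p j| \<le> 2 ||r_n - p||, so
       lse r_n \<rightarrow> p pointwise, and a strict inequality sdiff p s > 0 persists for large n.
   (3) Probability: for pmfs, pointwise convergence implies l2 convergence; and by
       Hoeffding's inequality plus Borel-Cantelli the empirical pmf converges pointwise
       almost surely.
   The theorem combines (3) to get l2 convergence of the empirical pmf to pmf P almost
   surely, and then (2) pathwise. *)

section \<open>Least squares projection onto convex square-summable sequences\<close>

definition sqdist :: "(nat \<Rightarrow> real) \<Rightarrow> (nat \<Rightarrow> real) \<Rightarrow> real" where
  "sqdist r p = (\<Sum>j. (r j - p j)\<^sup>2)"

lemma Phi_eq_sqdist: "Phi r p = sqdist r p / 2"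
  by (simp add: Phi_def sqdist_def)

lemma summable_sq_diff:
  fixes f g :: "nat \<Rightarrow> real"
  assumes "summable (\<lambda>j. (f j)\<^sup>2)" "summable (\<lambda>j. (g j)\<^sup>2)"
  shows "summable (\<lambda>j. (f j - g j)\<^sup>2)"
proof (rule summable_comparison_test'[where N = 0])
  show "summable (\<lambda>j. 2 * (f j)\<^sup>2 + 2 * (g j)\<^sup>2)"
    using assms by (intro summable_add summable_mult)
  fix n :: nat
  have "(f n - g n)\<^sup>2 \<le> 2 * (f n)\<^sup>2 + 2 * (g n)\<^sup>2"
    using zero_le_power2[of "f n + g n"] by (simp add: power2_eq_square algebra_simps)
  then show "norm ((f n - g n)\<^sup>2) \<le> 2 * (f n)\<^sup>2 + 2 * (g n)\<^sup>2" by simp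
qed

lemma sq_le_sqdist:
  assumes "summable (\<lambda>j. (r j)\<^sup>2)" "summable (\<lambda>j. (p j)\<^sup>2)"
  shows "(r j - p j)\<^sup>2 \<le> sqdist r p"
  unfolding sqdist_def
  using sum_le_suminf[OF summable_sq_diff[OF assms], of "{j}"] by simp

lemma sqdist_nonneg:
  assumes "summable (\<lambda>j. (r j)\<^sup>2)" "summable (\<lambda>j. (p j)\<^sup>2)"
  shows "0 \<le> sqdist r p"
  using sq_le_sqdist[OF assms, of 0] zero_le_power2 order_trans by blast

text \<open>C is convex (midpoints suffice for the projection argument).\<close>
lemma convexL2_midpoint:
  assumes "p \<in> convexL2" "q \<in> convexL2"
  shows "(\<lambda>j. (p j + q j) / 2) \<in> convexL2"
proof -
  have mid: "sdiff (\<lambda>j. (p j + q j) / 2) k = (sdiff p k + sdiff q k) / 2" for k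
    by (simp add: sdiff_def field_simps)
  have "0 \<le> sdiff p k" "0 \<le> sdiff q k" if "k \<ge> 1" for k
    using assms that by (auto simp: convexL2_def convex_seq_def)
  then have convex: "convex_seq (\<lambda>j. (p j + q j) / 2)"
    unfolding convex_seq_def mid by simp
  have "summable (\<lambda>j. ((p j + q j) / 2)\<^sup>2)"
  proof (rule summable_comparison_test'[where N = 0])
    show "summable (\<lambda>j. (p j)\<^sup>2 + (q j)\<^sup>2)"
      using assms by (intro summable_add) (auto simp: convexL2_def)
    fix n :: nat
    have "((p n + q n) / 2)\<^sup>2 \<le> (p n)\<^sup>2 + (q n)\<^sup>2"
      using zero_le_power2[of "p n - q n"] zero_le_power2[of "p n + q n"]
      by (simp add: power2_eq_square field_simps)
    then show "norm (((p n + q n) / 2)\<^sup>2) \<le> (p n)\<^sup>2 + (q n)\<^sup>2" by simp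
  qed
  with convex show ?thesis by (simp add: convexL2_def)
qed

text \<open>The parallelogram identity, in the form: distance to a midpoint.\<close>
lemma sqdist_midpoint:
  assumes r: "summable (\<lambda>j. (r j)\<^sup>2)" and p: "summable (\<lambda>j. (p j)\<^sup>2)"
    and q: "summable (\<lambda>j. (q j)\<^sup>2)"
  shows "sqdist r (\<lambda>j. (p j + q j) / 2) = sqdist r p / 2 + sqdist r q / 2 - sqdist p q / 4"
proof -
  have sp: "summable (\<lambda>j. (r j - p j)\<^sup>2 / 2)" and sq: "summable (\<lambda>j. (r j - q j)\<^sup>2 / 2)"
    and spq: "summable (\<lambda>j. (p j - q j)\<^sup>2 / 4)"
    using summable_sq_diff[OF r p] summable_sq_diff[OF r q] summable_sq_diff[OF p q]
    by (auto intro: summable_divide)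
  have "(r j - (p j + q j) / 2)\<^sup>2
      = (r j - p j)\<^sup>2 / 2 + (r j - q j)\<^sup>2 / 2 - (p j - q j)\<^sup>2 / 4" for j
    by (simp add: power2_eq_square field_simps)
  then have "sqdist r (\<lambda>j. (p j + q j) / 2)
      = (\<Sum>j. (r j - p j)\<^sup>2 / 2 + (r j - q j)\<^sup>2 / 2 - (p j - q j)\<^sup>2 / 4)"
    by (simp add: sqdist_def)
  also have "\<dots> = (\<Sum>j. (r j - p j)\<^sup>2 / 2) + (\<Sum>j. (r j - q j)\<^sup>2 / 2) - (\<Sum>j. (p j - q j)\<^sup>2 / 4)"
    using suminf_diff[OF summable_add[OF sp sq] spq] suminf_add[OF sp sq] by simp
  also have "\<dots> = sqdist r p / 2 + sqdist r q / 2 - sqdist p q / 4"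
    unfolding sqdist_def using sp sq spq by (simp add: suminf_divide summable_divide_iff)
  finally show ?thesis .
qed

lemma convex_seq_pointwise_limit:
  assumes conv: "\<And>k. convex_seq (Q k)" and lim: "\<And>j. (\<lambda>k. Q k j) \<longlonglongrightarrow> p j"
  shows "convex_seq p"
  unfolding convex_seq_def
proof (intro allI impI)
  fix k :: nat assume k: "1 \<le> k"
  have "(\<lambda>i. sdiff (Q i) k) \<longlonglongrightarrow> sdiff p k"
    unfolding sdiff_def by (intro tendsto_intros lim)
  moreover have "\<forall>i. 0 \<le> sdiff (Q i) k" using conv k by (auto simp: convex_seq_def)
  ultimately show "0 \<le> sdiff p k" by (intro LIMSEQ_le_const) auto
qed

text \<open>Fatou's lemma for the squared distance: bounds on sqdist r (Q k) pass to the
  pointwise limit, which is then at finite distance from r.\<close>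
lemma sqdist_pointwise_limit_le:
  assumes r: "summable (\<lambda>j. (r j)\<^sup>2)" and Q: "\<And>k. summable (\<lambda>j. (Q k j)\<^sup>2)"
    and lim: "\<And>j. (\<lambda>k. Q k j) \<longlonglongrightarrow> p j"
    and bound: "\<And>k. sqdist r (Q k) \<le> b k" and b: "b \<longlonglongrightarrow> m"
  shows "summable (\<lambda>j. (r j - p j)\<^sup>2)" and "sqdist r p \<le> m"
proof -
  have partial: "(\<Sum>j<N. (r j - p j)\<^sup>2) \<le> m" for N
  proof (rule LIMSEQ_le[OF _ b])
    show "(\<lambda>k. \<Sum>j<N. (r j - Q k j)\<^sup>2) \<longlonglongrightarrow> (\<Sum>j<N. (r j - p j)\<^sup>2)"
      by (intro tendsto_intros lim)
    have "(\<Sum>j<N. (r j - Q k j)\<^sup>2) \<le> sqdist r (Q k)" for k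
      unfolding sqdist_def by (rule sum_le_suminf[OF summable_sq_diff[OF r Q]]) auto
    then show "\<exists>K. \<forall>k\<ge>K. (\<Sum>j<N. (r j - Q k j)\<^sup>2) \<le> b k"
      using bound order_trans by blast
  qed
  show summ: "summable (\<lambda>j. (r j - p j)\<^sup>2)"
  proof (rule bounded_imp_summable[where B = m])
    show "(\<Sum>k\<le>n. (r k - p k)\<^sup>2) \<le> m" for n
      using partial[of "Suc n"] by (metis lessThan_Suc_atMost)
  qed simp
  show "sqdist r p \<le> m"
    unfolding sqdist_def by (rule suminf_le_const[OF summ partial])
qed

text \<open>A minimising sequence in C converges pointwise: by the parallelogram identity its
  members are pairwise close in l2, hence in every coordinate.\<close>
lemma minimising_seq_Cauchy:
  assumes r: "summable (\<lambda>j. (r j)\<^sup>2)"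
    and lower: "\<And>q. q \<in> convexL2 \<Longrightarrow> m \<le> sqdist r q"
    and QC: "\<And>k. Q k \<in> convexL2" and QS: "\<And>k. sqdist r (Q k) < m + 1 / (real k + 1)"
  shows "Cauchy (\<lambda>k. Q k j)"
proof (rule CauchyI)
  have Q2: "summable (\<lambda>j. (Q k j)\<^sup>2)" for k using QC[of k] by (simp add: convexL2_def)
  have close: "(Q k j - Q l j)\<^sup>2 \<le> 2 / (real k + 1) + 2 / (real l + 1)" for k l
  proof -
    have "m \<le> sqdist r (\<lambda>j. (Q k j + Q l j) / 2)" by (rule lower[OF convexL2_midpoint[OF QC QC]])
    also have "\<dots> = sqdist r (Q k) / 2 + sqdist r (Q l) / 2 - sqdist (Q k) (Q l) / 4"
      by (rule sqdist_midpoint[OF r Q2 Q2])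
    finally have "sqdist (Q k) (Q l) \<le> 2 / (real k + 1) + 2 / (real l + 1)"
      using QS[of k] QS[of l] by linarith
    then show ?thesis using sq_le_sqdist[OF Q2 Q2, of k j l] by linarith
  qed
  fix e :: real assume e: "0 < e"
  obtain K :: nat where "real K > 4 / e\<^sup>2" using reals_Archimedean2 by blast
  then have "4 / e\<^sup>2 < real K + 1" by simp
  then have K: "4 / (real K + 1) < e\<^sup>2" using e by (simp add: field_simps)
  show "\<exists>K. \<forall>a\<ge>K. \<forall>b\<ge>K. norm (Q a j - Q b j) < e"
  proof (intro exI allI impI)
    fix a b assume "K \<le> a" "K \<le> b"
    then have "2 / (real a + 1) \<le> 2 / (real K + 1)" "2 / (real b + 1) \<le> 2 / (real K + 1)"
      by (simp_all add: frac_le)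
    then have "(Q a j - Q b j)\<^sup>2 < e\<^sup>2" using close[of a b] K by simp
    then show "norm (Q a j - Q b j) < e" using e
      by (metis abs_ge_zero abs_of_pos power2_abs power_less_imp_less_base real_norm_def)
  qed
qed

lemma convexL2_has_minimiser:
  assumes r: "summable (\<lambda>j. (r j)\<^sup>2)"
  shows "\<exists>p\<in>convexL2. \<forall>q\<in>convexL2. sqdist r p \<le> sqdist r q"
proof -
  define m where "m = (INF q\<in>convexL2. sqdist r q)"
  have zero: "(\<lambda>_. 0) \<in> convexL2" by (simp add: convexL2_def convex_seq_def sdiff_def)
  have bdd: "bdd_below (sqdist r ` convexL2)"
    using r by (intro bdd_belowI[where m = 0]) (auto simp: convexL2_def intro!: sqdist_nonneg)
  have lower: "m \<le> sqdist r q" if "q \<in> convexL2" for q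
    unfolding m_def by (rule cINF_lower[OF bdd that])
  have "\<exists>q\<in>convexL2. sqdist r q < m + 1 / (real k + 1)" for k
    using cInf_lessD[of "sqdist r ` convexL2" "m + 1 / (real k + 1)"] zero
    by (auto simp: m_def add_pos_pos)
  then obtain Q where QC: "\<And>k. Q k \<in> convexL2"
      and QS: "\<And>k. sqdist r (Q k) < m + 1 / (real k + 1)"
    by metis
  define p where "p j = lim (\<lambda>k. Q k j)" for j
  have lim: "(\<lambda>k. Q k j) \<longlonglongrightarrow> p j" for j
    using minimising_seq_Cauchy[OF r lower QC QS, of j]
    by (simp add: Cauchy_convergent_iff convergent_LIMSEQ_iff p_def)
  have "(\<lambda>k. m + 1 / (real k + 1)) \<longlonglongrightarrow> m + 0"
    using LIMSEQ_inverse_real_of_nat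
    by (intro tendsto_intros) (simp add: inverse_eq_divide add.commute)
  then have summ: "summable (\<lambda>j. (r j - p j)\<^sup>2)" and le: "sqdist r p \<le> m"
    using sqdist_pointwise_limit_le[OF r _ lim, where b = "\<lambda>k. m + 1 / (real k + 1)" and m = m] QC QS
    by (auto simp: convexL2_def less_imp_le)
  have "summable (\<lambda>j. (p j)\<^sup>2)"
    using summable_sq_diff[OF r summ] by simp
  moreover have "convex_seq p"
    using QC by (intro convex_seq_pointwise_limit[OF _ lim]) (auto simp: convexL2_def)
  ultimately have "p \<in> convexL2" by (simp add: convexL2_def)
  then show ?thesis using le lower by force
qed

text \<open>Uniqueness of the projection: two minimisers p, q would make their midpoint
  strictly better unless sqdist p q = 0.\<close>
lemma convexL2_minimiser_unique:
  assumes r: "summable (\<lambda>j. (r j)\<^sup>2)"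
    and p: "p \<in> convexL2" "\<forall>c\<in>convexL2. sqdist r p \<le> sqdist r c"
    and q: "q \<in> convexL2" "\<forall>c\<in>convexL2. sqdist r q \<le> sqdist r c"
  shows "p = q"
proof
  fix j
  have p2: "summable (\<lambda>j. (p j)\<^sup>2)" and q2: "summable (\<lambda>j. (q j)\<^sup>2)"
    using p q by (auto simp: convexL2_def)
  have "sqdist r p \<le> sqdist r (\<lambda>j. (p j + q j) / 2)"
    using p(2) convexL2_midpoint[OF p(1) q(1)] by blast
  also have "\<dots> = sqdist r p / 2 + sqdist r q / 2 - sqdist p q / 4"
    by (rule sqdist_midpoint[OF r p2 q2])
  finally have "sqdist p q \<le> 0" using p q by force
  then have "(p j - q j)\<^sup>2 \<le> 0" using sq_le_sqdist[OF p2 q2, of j] by linarith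
  then show "p j = q j" by simp
qed

lemma lse_minimiser:
  assumes r: "summable (\<lambda>j. (r j)\<^sup>2)"
  shows "lse r \<in> convexL2" and "\<And>q. q \<in> convexL2 \<Longrightarrow> sqdist r (lse r) \<le> sqdist r q"
proof -
  obtain p where "p \<in> convexL2" "\<forall>q\<in>convexL2. sqdist r p \<le> sqdist r q"
    using convexL2_has_minimiser[OF r] by blast
  then have "\<exists>!p. p \<in> convexL2 \<and> (\<forall>q\<in>convexL2. Phi r p \<le> Phi r q)"
    unfolding Phi_eq_sqdist by (intro ex1I[of _ p]) (auto intro: convexL2_minimiser_unique[OF r])
  from theI'[OF this] show "lse r \<in> convexL2" "\<And>q. q \<in> convexL2 \<Longrightarrow> sqdist r (lse r) \<le> sqdist r q"
    unfolding lse_def Phi_eq_sqdist by auto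
qed

section \<open>Stability of the estimator and of its knots\<close>

text \<open>If r_n tends to a point p of C in l2, the projections lse r_n tend to p
  coordinatewise, because |lse r_n j - p j| \<le> 2 sqrt (sqdist r_n p).\<close>
lemma lse_pointwise_limit:
  assumes r2: "\<And>n. n \<ge> 1 \<Longrightarrow> summable (\<lambda>j. (r n j)\<^sup>2)"
    and pC: "p \<in> convexL2" and lim: "(\<lambda>n. sqdist (r n) p) \<longlonglongrightarrow> 0"
  shows "(\<lambda>n. lse (r n) j) \<longlonglongrightarrow> p j"
proof -
  have p2: "summable (\<lambda>j. (p j)\<^sup>2)" using pC by (simp add: convexL2_def)
  have bound: "\<bar>lse (r n) j - p j\<bar> \<le> 2 * sqrt (sqdist (r n) p)" if n: "n \<ge> 1" for n
  proof -
    have q2: "summable (\<lambda>j. (lse (r n) j)\<^sup>2)"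
      using lse_minimiser(1)[OF r2[OF n]] by (simp add: convexL2_def)
    have "(r n j - lse (r n) j)\<^sup>2 \<le> sqdist (r n) p"
      using sq_le_sqdist[OF r2[OF n] q2, of j] lse_minimiser(2)[OF r2[OF n] pC] by linarith
    then have "\<bar>r n j - lse (r n) j\<bar> \<le> sqrt (sqdist (r n) p)"
      using real_sqrt_le_mono by fastforce
    moreover have "\<bar>r n j - p j\<bar> \<le> sqrt (sqdist (r n) p)"
      using real_sqrt_le_mono[OF sq_le_sqdist[OF r2[OF n] p2, of j]] by simp
    ultimately show ?thesis by arith
  qed
  have "(\<lambda>n. 2 * sqrt (sqdist (r n) p)) \<longlonglongrightarrow> 2 * sqrt 0"
    by (intro tendsto_intros lim)
  then have "(\<lambda>n. 2 * sqrt (sqdist (r n) p)) \<longlonglongrightarrow> 0" by simp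
  moreover have "eventually (\<lambda>n. norm (lse (r n) j - p j) \<le> 2 * sqrt (sqdist (r n) p)) sequentially"
    unfolding eventually_sequentially by (intro exI[of _ 1]) (simp add: bound)
  ultimately have "(\<lambda>n. lse (r n) j - p j) \<longlonglongrightarrow> 0"
    by (rule Lim_null_comparison[rotated])
  then show ?thesis by (simp add: LIM_zero_iff)
qed

lemma knot_persists:
  assumes lim: "\<And>j. (\<lambda>n. q n j) \<longlonglongrightarrow> p j" and knot: "is_knot p s"
  shows "\<exists>n0. \<forall>n\<ge>n0. is_knot (q n) s"
proof -
  have "(\<lambda>n. sdiff (q n) s) \<longlonglongrightarrow> sdiff p s"
    unfolding sdiff_def by (intro tendsto_intros lim)
  moreover have "0 < sdiff p s" using knot by (simp add: is_knot_def)
  ultimately have "eventually (\<lambda>n. 0 < sdiff (q n) s) sequentially"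
    by (rule order_tendstoD(1))
  then show ?thesis using knot by (auto simp: is_knot_def eventually_sequentially)
qed

section \<open>Probability vectors on the naturals\<close>

lemma prob_vector_le_1:
  fixes f :: "nat \<Rightarrow> real"
  assumes "f sums 1" "\<And>j. 0 \<le> f j"
  shows "f j \<le> 1"
  using sum_le_suminf[OF sums_summable[OF assms(1)], of "{j}"] assms by (simp add: sums_unique[symmetric])

lemma prob_vector_square_summable:
  fixes f :: "nat \<Rightarrow> real"
  assumes "f sums 1" "\<And>j. 0 \<le> f j"
  shows "summable (\<lambda>j. (f j)\<^sup>2)"
proof (rule summable_comparison_test'[OF sums_summable[OF assms(1)], where N = 0])
  fix j
  have "f j * f j \<le> f j * 1"
    using prob_vector_le_1[OF assms] assms(2) by (intro mult_left_mono) auto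
  then show "norm ((f j)\<^sup>2) \<le> f j" by (simp add: power2_eq_square)
qed

text \<open>Tail control for two probability vectors f, g: outside the window {..<N} the
  squared distance is dominated by the remaining masses, since (a - b)^2 \<le> a + b
  for a, b in [0, 1].\<close>
lemma sqdist_prob_vectors_le_window:
  fixes f g :: "nat \<Rightarrow> real"
  assumes f0: "\<And>j. 0 \<le> f j" and fs: "f sums 1" and g0: "\<And>j. 0 \<le> g j" and gs: "g sums 1"
  shows "0 \<le> sqdist f g"
    and "sqdist f g \<le> (\<Sum>j<N. (f j - g j)\<^sup>2) + 2 - (\<Sum>j<N. f j + g j)"
proof -
  have sq_le: "(f j - g j)\<^sup>2 \<le> f j + g j" for j
  proof -
    have "\<bar>f j - g j\<bar> \<le> 1"
      using prob_vector_le_1[OF fs f0, of j] prob_vector_le_1[OF gs g0, of j] f0[of j] g0[of j]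
      by (simp add: abs_le_iff)
    then have "(f j - g j)\<^sup>2 \<le> \<bar>f j - g j\<bar>"
      by (metis abs_ge_zero mult_left_le power2_abs power2_eq_square)
    moreover have "\<bar>f j - g j\<bar> \<le> f j + g j" using f0[of j] g0[of j] by arith
    ultimately show ?thesis by linarith
  qed
  have "(\<lambda>j. f j + g j) sums (1 + 1)" by (intro sums_add fs gs)
  then have window: "(\<lambda>j. if j \<in> {..<N} then (f j - g j)\<^sup>2 else f j + g j)
      sums ((\<Sum>j<N. (f j - g j)\<^sup>2) + 2 - (\<Sum>j<N. f j + g j))"
    by (rule sums_If_finite_set') (simp_all add: sum_subtractf)
  have le: "(f j - g j)\<^sup>2 \<le> (if j \<in> {..<N} then (f j - g j)\<^sup>2 else f j + g j)" for j
    using sq_le by simp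
  have "summable (\<lambda>j. (f j - g j)\<^sup>2)"
    by (rule summable_comparison_test'[OF sums_summable[OF window], where N = 0]) (use le in auto)
  then show "0 \<le> sqdist f g" "sqdist f g \<le> (\<Sum>j<N. (f j - g j)\<^sup>2) + 2 - (\<Sum>j<N. f j + g j)"
    unfolding sqdist_def by (auto intro: sums_le[OF le summable_sums window] suminf_nonneg)
qed

text \<open>Fix a window carrying almost all of the mass of p; inside it the
  window bound above converges to something small.\<close>
lemma prob_vector_pointwise_imp_l2:
  fixes e :: "nat \<Rightarrow> nat \<Rightarrow> real" and p :: "nat \<Rightarrow> real"
  assumes e0: "\<And>n j. 0 \<le> e n j" and es: "\<And>n. n \<ge> 1 \<Longrightarrow> e n sums 1"
    and p0: "\<And>j. 0 \<le> p j" and ps: "p sums 1"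
    and lim: "\<And>j. (\<lambda>n. e n j) \<longlonglongrightarrow> p j"
  shows "(\<lambda>n. sqdist (e n) p) \<longlonglongrightarrow> 0"
proof (rule LIMSEQ_I)
  fix \<epsilon> :: real assume \<epsilon>: "0 < \<epsilon>"
  define B where "B n N = (\<Sum>j<N. (e n j - p j)\<^sup>2) + 2 - (\<Sum>j<N. e n j + p j)" for n N
  have "(\<lambda>N. \<Sum>j<N. p j) \<longlonglongrightarrow> 1" using ps by (simp add: sums_def)
  then obtain N where N: "1 - \<epsilon>/4 < (\<Sum>j<N. p j)"
    using \<epsilon> order_tendstoD(1)[of _ 1 sequentially "1 - \<epsilon>/4"] by (auto simp: eventually_sequentially)
  have "(\<lambda>n. B n N) \<longlonglongrightarrow> (\<Sum>j<N. (p j - p j)\<^sup>2) + 2 - (\<Sum>j<N. p j + p j)"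
    unfolding B_def by (intro tendsto_intros lim)
  moreover have "(\<Sum>j<N. (p j - p j)\<^sup>2) + 2 - (\<Sum>j<N. p j + p j) < \<epsilon>"
    using N \<epsilon> by (simp add: sum.distrib sum_distrib_left[symmetric])
  ultimately have "eventually (\<lambda>n. B n N < \<epsilon>) sequentially"
    by (rule order_tendstoD(2))
  then obtain n0 where n0: "\<And>n. n \<ge> n0 \<Longrightarrow> B n N < \<epsilon>"
    by (auto simp: eventually_sequentially)
  show "\<exists>n0. \<forall>n\<ge>n0. norm (sqdist (e n) p - 0) < \<epsilon>"
  proof (intro exI allI impI)
    fix n assume n: "max n0 1 \<le> n"
    then have "n \<ge> 1" by simp
    then have "0 \<le> sqdist (e n) p" "sqdist (e n) p \<le> B n N"
      using sqdist_prob_vectors_le_window(1)[OF e0 es p0 ps]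
        sqdist_prob_vectors_le_window(2)[OF e0 es p0 ps, where N = N] by (auto simp: B_def)
    then show "norm (sqdist (e n) p - 0) < \<epsilon>" using n0[of n] n by auto
  qed
qed

lemma pmf_sums_1: "pmf (P :: nat pmf) sums 1"
proof -
  have "(\<lambda>N. measure (measure_pmf P) {..<N}) \<longlonglongrightarrow> measure (measure_pmf P) (\<Union>N. {..<N})"
    by (rule measure_pmf.finite_Lim_measure_incseq) (auto simp: incseq_def)
  moreover have "(\<Union>N. {..<N::nat}) = UNIV" by auto
  ultimately show ?thesis
    by (simp add: sums_def measure_measure_pmf_finite)
qed

section \<open>The empirical pmf\<close>

lemma emp_pmf_as_sum:
  "emp_pmf X n \<omega> j = (\<Sum>i\<in>{1..n}. if X i \<omega> = j then 1 / real n else 0)"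
proof -
  have "real (card {i \<in> {1..n}. X i \<omega> = j}) = (\<Sum>i\<in>{1..n}. if X i \<omega> = j then 1 else 0)"
    using sum.inter_filter[of "{1..n}" "\<lambda>_. 1 :: real" "\<lambda>i. X i \<omega> = j"] by simp
  then have "emp_pmf X n \<omega> j = (\<Sum>i\<in>{1..n}. (if X i \<omega> = j then 1 else 0) / real n)"
    by (simp add: emp_pmf_def sum_divide_distrib)
  also have "\<dots> = (\<Sum>i\<in>{1..n}. if X i \<omega> = j then 1 / real n else 0)"
    by (intro sum.cong) auto
  finally show ?thesis .
qed

lemma emp_pmf_nonneg: "0 \<le> emp_pmf X n \<omega> j"
  by (simp add: emp_pmf_def)

lemma emp_pmf_sums_1:
  assumes "n \<ge> 1" shows "emp_pmf X n \<omega> sums 1"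
proof -
  have "(\<lambda>j. if X i \<omega> = j then 1 / real n else 0) sums (1 / real n)" for i
    using sums_single[of "X i \<omega>" "\<lambda>_. 1 / real n"] by (simp add: eq_commute)
  then have "(\<lambda>j. \<Sum>i\<in>{1..n}. if X i \<omega> = j then 1 / real n else 0) sums (\<Sum>i\<in>{1..n}. 1 / real n)"
    by (rule sums_sum)
  moreover have "(\<Sum>i\<in>{1..n}. 1 / real n) = 1" using assms by simp
  ultimately show ?thesis by (simp add: emp_pmf_as_sum[abs_def])
qed

lemma LIMSEQ_of_eventually_close:
  fixes f :: "nat \<Rightarrow> real"
  assumes "\<And>m::nat. eventually (\<lambda>n. \<bar>f n - l\<bar> < 1 / (real m + 1)) sequentially"
  shows "f \<longlonglongrightarrow> l"
proof (rule LIMSEQ_I)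
  fix \<epsilon> :: real assume "0 < \<epsilon>"
  then obtain m :: nat where "inverse (real (Suc m)) < \<epsilon>" using reals_Archimedean by blast
  then have "1 / (real m + 1) < \<epsilon>" by (simp add: inverse_eq_divide add.commute)
  with assms[of m] show "\<exists>n0. \<forall>n\<ge>n0. norm (f n - l) < \<epsilon>"
    unfolding eventually_sequentially real_norm_def by (blast intro: less_trans)
qed

context prob_space
begin

lemma emp_pmf_tail:
  fixes X :: "nat \<Rightarrow> 'a \<Rightarrow> nat" and P :: "nat pmf"
  assumes indep: "indep_vars (\<lambda>_. count_space UNIV) X {1..}"
    and dist: "\<And>i. i \<ge> 1 \<Longrightarrow> distr M (count_space UNIV) (X i) = measure_pmf P"
    and n: "n \<ge> 1" and d: "d > 0"
  shows "prob {\<omega> \<in> space M. d \<le> \<bar>emp_pmf X n \<omega> j - pmf P j\<bar>} \<le> 2 * exp (-2 * real n * d\<^sup>2)"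
proof -
  define Y where "Y i \<omega> = (if X i \<omega> = j then 1 else 0 :: real)" for i \<omega>
  have Xm: "X i \<in> measurable M (count_space UNIV)" if "i \<ge> 1" for i
    using indep that by (auto simp: indep_vars_def)
  have indY: "indep_vars (\<lambda>_. borel) Y {1..n}"
    unfolding Y_def
    by (rule indep_vars_compose2[where Y = "\<lambda>i x. if x = j then 1 else 0 :: real",
          OF indep_vars_subset[OF indep]]) auto
  have EY: "expectation (Y i) = pmf P j" if "i \<in> {1..n}" for i
  proof -
    have "expectation (Y i) = integral\<^sup>L (distr M (count_space UNIV) (X i)) (\<lambda>x. if x = j then 1 else 0 :: real)"
      using that by (subst integral_distr[OF Xm]) (auto simp: Y_def[abs_def])
    also have "\<dots> = integral\<^sup>L (measure_pmf P) (indicator {j})"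
    proof -
      have "(\<lambda>x. if x = j then 1 else 0 :: real) = indicator {j}" by (auto simp: indicator_def)
      then show ?thesis using that dist by simp
    qed
    also have "\<dots> = pmf P j" by (simp add: measure_pmf_single)
    finally show ?thesis .
  qed
  interpret H: Hoeffding_ineq M "{1..n}" Y "\<lambda>_. 0" "\<lambda>_. 1" "\<Sum>i\<in>{1..n}. expectation (Y i)"
  proof unfold_locales
    show "AE x in M. Y i x \<in> {0..1}" for i by (simp add: Y_def)
    show "indep_vars (\<lambda>_. borel) Y {1..n}" by (rule indY)
  qed simp_all
  have mu: "(\<Sum>i\<in>{1..n}. expectation (Y i)) = real n * pmf P j"
    using EY by simp
  have npos: "real n > 0" using n by simp
  have rescale: "d \<le> \<bar>S / real n - a\<bar> \<longleftrightarrow> real n * d \<le> \<bar>S - real n * a\<bar>" for S a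
  proof -
    have "\<bar>S / real n - a\<bar> = \<bar>S - real n * a\<bar> / real n"
      using npos by (simp add: field_simps)
    then show ?thesis using npos by (simp add: field_simps mult.commute)
  qed
  have "emp_pmf X n \<omega> j = (\<Sum>i\<in>{1..n}. Y i \<omega>) / real n" for \<omega>
    unfolding emp_pmf_as_sum sum_divide_distrib by (intro sum.cong) (auto simp: Y_def)
  then have "d \<le> \<bar>emp_pmf X n \<omega> j - pmf P j\<bar>
      \<longleftrightarrow> real n * d \<le> \<bar>(\<Sum>i\<in>{1..n}. Y i \<omega>) - (\<Sum>i\<in>{1..n}. expectation (Y i))\<bar>" for \<omega>
    unfolding mu by (simp only: rescale)
  then have "{\<omega> \<in> space M. d \<le> \<bar>emp_pmf X n \<omega> j - pmf P j\<bar>} =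
      {x \<in> space M. real n * d \<le> \<bar>(\<Sum>i\<in>{1..n}. Y i x) - (\<Sum>i\<in>{1..n}. expectation (Y i))\<bar>}"
    by simp
  also have "prob \<dots> \<le> 2 * exp (-2 * (real n * d)\<^sup>2 / (\<Sum>i\<in>{1..n}. (1 - 0)\<^sup>2))"
    using npos d by (intro H.Hoeffding_ineq_abs_ge) auto
  also have "-2 * (real n * d)\<^sup>2 / (\<Sum>i\<in>{1..n}. (1 - 0)\<^sup>2) = -2 * real n * d\<^sup>2"
    using npos by (simp add: power2_eq_square field_simps)
  finally show ?thesis by simp
qed

text \<open>The Hoeffding bounds are summable in n, so Borel-Cantelli applies for each
  fixed point j and tolerance 1/(m+1); there are countably many such pairs.\<close>
lemma emp_pmf_AE_pointwise_limit:
  fixes X :: "nat \<Rightarrow> 'a \<Rightarrow> nat" and P :: "nat pmf"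
  assumes indep: "indep_vars (\<lambda>_. count_space UNIV) X {1..}"
    and dist: "\<And>i. i \<ge> 1 \<Longrightarrow> distr M (count_space UNIV) (X i) = measure_pmf P"
  shows "AE \<omega> in M. \<forall>j. (\<lambda>n. emp_pmf X n \<omega> j) \<longlonglongrightarrow> pmf P j"
proof -
  have Xm: "X i \<in> measurable M (count_space UNIV)" if "i \<ge> 1" for i
    using indep that by (auto simp: indep_vars_def)
  have emp_meas: "(\<lambda>\<omega>. emp_pmf X n \<omega> j) \<in> borel_measurable M" for n j
    unfolding emp_pmf_as_sum
    by (intro borel_measurable_sum) (auto intro!: measurable_compose[OF Xm])
  have single: "AE \<omega> in M. eventually (\<lambda>n. \<bar>emp_pmf X n \<omega> j - pmf P j\<bar> < d) sequentially"
    if d: "d > 0" for j d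
  proof -
    define A where "A n = {\<omega> \<in> space M. d \<le> \<bar>emp_pmf X n \<omega> j - pmf P j\<bar>}" for n
    have meas: "A n \<in> sets M" for n
      unfolding A_def using emp_meas[of n j] by measurable
    have bound: "prob (A n) \<le> 2 * exp (-2 * d\<^sup>2) ^ n" for n
    proof (cases "n \<ge> 1")
      case True
      have "prob (A n) \<le> 2 * exp (-2 * real n * d\<^sup>2)"
        unfolding A_def by (rule emp_pmf_tail[OF indep dist True d])
      also have "exp (-2 * real n * d\<^sup>2) = exp (-2 * d\<^sup>2) ^ n"
        by (subst exp_of_nat_mult[symmetric]) (simp add: mult_ac)
      finally show ?thesis .
    next
      case False
      then have "2 * exp (-2 * d\<^sup>2) ^ n = 2" by (simp add: not_less_eq_eq)
      then show ?thesis using prob_le_1[of "A n"] by linarith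
    qed
    have "summable (\<lambda>n. prob (A n))"
      by (rule summable_comparison_test'[where N = 0 and g = "\<lambda>n. 2 * exp (-2 * d\<^sup>2) ^ n"])
        (use d bound in \<open>auto intro!: summable_mult summable_geometric\<close>)
    then have "AE \<omega> in M. eventually (\<lambda>n. \<omega> \<in> space M - A n) sequentially"
      by (intro borel_cantelli_AE1[OF meas]) (simp_all add: emeasure_eq_measure)
    then show ?thesis
      by (rule eventually_mono) (auto simp: A_def elim!: eventually_mono)
  qed
  have "AE \<omega> in M. \<forall>j. \<forall>m::nat.
      eventually (\<lambda>n. \<bar>emp_pmf X n \<omega> j - pmf P j\<bar> < 1 / (real m + 1)) sequentially"
    using single by (simp add: AE_all_countable)
  then show ?thesis
    by (rule eventually_mono) (blast intro: LIMSEQ_of_eventually_close)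
qed

end

theorem proposition3:
  fixes M :: "'a measure" and X :: "nat \<Rightarrow> 'a \<Rightarrow> nat" and P :: "nat pmf" and s :: nat
  assumes "prob_space M"
    and "prob_space.indep_vars M (\<lambda>_. count_space UNIV) X {1..}"
    and "\<And>i. i \<ge> 1 \<Longrightarrow> distr M (count_space UNIV) (X i) = measure_pmf P"
    and "convex_seq (pmf P)"
    and "set_pmf P = UNIV \<or> (\<exists>S::nat. S \<ge> 1 \<and> set_pmf P = {0..S})"
    and "s > 0"
    and "is_knot (pmf P) s"
  shows "AE \<omega> in M. \<exists>n0. \<forall>n\<ge>n0. is_knot (lse (emp_pmf X n \<omega>)) s"
proof -
  interpret prob_space M by fact
  have pC: "pmf P \<in> convexL2"
    using assms(4) prob_vector_square_summable[OF pmf_sums_1 pmf_nonneg]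
    by (simp add: convexL2_def)
  show ?thesis
    using emp_pmf_AE_pointwise_limit[OF assms(2,3)]
  proof (rule eventually_mono)
    fix \<omega> assume pointwise: "\<forall>j. (\<lambda>n. emp_pmf X n \<omega> j) \<longlonglongrightarrow> pmf P j"
    have emp2: "summable (\<lambda>j. (emp_pmf X n \<omega> j)\<^sup>2)" if "n \<ge> 1" for n
      using prob_vector_square_summable[OF emp_pmf_sums_1[OF that] emp_pmf_nonneg] .
    have "(\<lambda>n. sqdist (emp_pmf X n \<omega>) (pmf P)) \<longlonglongrightarrow> 0"
      using pointwise
      by (intro prob_vector_pointwise_imp_l2[OF emp_pmf_nonneg emp_pmf_sums_1 pmf_nonneg pmf_sums_1]) auto
    then have "(\<lambda>n. lse (emp_pmf X n \<omega>) j) \<longlonglongrightarrow> pmf P j" for j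
      using lse_pointwise_limit[where r = "\<lambda>n. emp_pmf X n \<omega>", OF emp2 pC] by blast
    then show "\<exists>n0. \<forall>n\<ge>n0. is_knot (lse (emp_pmf X n \<omega>)) s"
      by (rule knot_persists[OF _ assms(7)])
  qed
qed

end
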